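(* For each of the classes $\mathcal{T}_1$ (the $T_1$-spaces), $\mathcal{T}_2$ (the Hausdorff spaces), $\mathcal{R}$ (the regular spaces) and $\mathcal{M}$ (the metrisable spaces), the $\pi$-index set $\{m\in\omega\mid \pi(m)\in\mathcal{C}\}$ is $\Pi^1_1$.
   Context: $P\omega$ is the powerset of $\omega$ with the Scott topology, whose basic open sets are $\check D_n=\{A\subseteq\omega\mid D_n\subseteq A\}$, where $(D_n)$ is the standard numbering of finite subsets of $\omega$. $\pi$ is the standard numbering of the $\Pi^0_2$-subspaces of $P\omega$ (effective Borel hierarchy): writing $U_k=\bigcup_{n\in W_k}\check D_n$ for the standard numbering of c.e. open sets ($W_k$ the $k$-th c.e. set), $\pi(m)=\{A\subseteq\omega\mid \forall i\,(A\in U_{\langle m,i,0\rangle}\to A\in U_{\langle m,i,1\rangle})\}$ (for a computable tupling function), equipped with the subspace topology. *)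

theory Defs
  imports "HOL-Analysis.Analysis" "HOL-Library.Nat_Bijection"
begin

datatype trm = TVar nat | TZero | TSuc trm | TPlus trm trm | TTimes trm trm

fun tval :: "(nat \<Rightarrow> nat) \<Rightarrow> trm \<Rightarrow> nat" where
  "tval e (TVar i) = e i"
| "tval e TZero = 0"
| "tval e (TSuc t) = Suc (tval e t)"
| "tval e (TPlus s t) = tval e s + tval e t"
| "tval e (TTimes s t) = tval e s * tval e t"

datatype fm = FEq trm trm | FLess trm trm | FMem trm | FNot fm | FAnd fm fm | FOr fm fm
  | FEx fm | FAll fm | FBEx trm fm | FBAll trm fm

text \<open>de Bruijn semantics: variable 0 is the innermost bound number variable;
  \<open>X\<close> interprets the (unique) set variable.\<close>
fun sat :: "nat set \<Rightarrow> (nat \<Rightarrow> nat) \<Rightarrow> fm \<Rightarrow> bool" where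
  "sat X e (FEq s t) = (tval e s = tval e t)"
| "sat X e (FLess s t) = (tval e s < tval e t)"
| "sat X e (FMem t) = (tval e t \<in> X)"
| "sat X e (FNot \<phi>) = (\<not> sat X e \<phi>)"
| "sat X e (FAnd \<phi> \<psi>) = (sat X e \<phi> \<and> sat X e \<psi>)"
| "sat X e (FOr \<phi> \<psi>) = (sat X e \<phi> \<or> sat X e \<psi>)"
| "sat X e (FEx \<phi>) = (\<exists>v. sat X (case_nat v e) \<phi>)"
| "sat X e (FAll \<phi>) = (\<forall>v. sat X (case_nat v e) \<phi>)"
| "sat X e (FBEx t \<phi>) = (\<exists>v < tval e t. sat X (case_nat v e) \<phi>)"
| "sat X e (FBAll t \<phi>) = (\<forall>v < tval e t. sat X (case_nat v e) \<phi>)"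

text \<open>Bounded (Delta_0) formulas without the set variable, and Sigma_1 formulas
  (existential prefix over Delta_0), which define exactly the c.e. sets.\<close>
inductive delta0 :: "fm \<Rightarrow> bool" where
  "delta0 (FEq s t)"
| "delta0 (FLess s t)"
| "delta0 \<phi> \<Longrightarrow> delta0 (FNot \<phi>)"
| "delta0 \<phi> \<Longrightarrow> delta0 \<psi> \<Longrightarrow> delta0 (FAnd \<phi> \<psi>)"
| "delta0 \<phi> \<Longrightarrow> delta0 \<psi> \<Longrightarrow> delta0 (FOr \<phi> \<psi>)"
| "delta0 \<phi> \<Longrightarrow> delta0 (FBEx t \<phi>)"
| "delta0 \<phi> \<Longrightarrow> delta0 (FBAll t \<phi>)"

inductive sigma1 :: "fm \<Rightarrow> bool" where
  "delta0 \<phi> \<Longrightarrow> sigma1 \<phi>"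
| "sigma1 \<phi> \<Longrightarrow> sigma1 (FEx \<phi>)"

lemma div10_less: "n mod 10 \<noteq> 0 \<Longrightarrow> n div 10 < (n::nat)"
  by (cases "n = 0") auto

lemma decode_fst_less: "n mod 10 \<noteq> 0 \<Longrightarrow> fst (prod_decode (n div 10)) < n"
  by (metis div10_less le_prod_encode_1 order.strict_trans1 prod.collapse prod_decode_inverse)

lemma decode_snd_less: "n mod 10 \<noteq> 0 \<Longrightarrow> snd (prod_decode (n div 10)) < n"
  by (metis div10_less le_prod_encode_2 order.strict_trans1 prod.collapse prod_decode_inverse)

function dec_trm :: "nat \<Rightarrow> trm" where
  "dec_trm n =
    (if n mod 10 = 0 then TVar (n div 10)
     else if n mod 10 = 1 then TZero
     else if n mod 10 = 2 then TSuc (dec_trm (n div 10))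
     else if n mod 10 = 3 then TPlus (dec_trm (fst (prod_decode (n div 10))))
                                     (dec_trm (snd (prod_decode (n div 10))))
     else TTimes (dec_trm (fst (prod_decode (n div 10))))
                 (dec_trm (snd (prod_decode (n div 10)))))"
  by pat_completeness auto
termination
  by (relation "Wellfounded.measure id") (auto simp: div10_less decode_fst_less decode_snd_less)

function dec_fm :: "nat \<Rightarrow> fm" where
  "dec_fm n =
    (if n mod 10 = 0 then FEq (dec_trm (fst (prod_decode (n div 10))))
                              (dec_trm (snd (prod_decode (n div 10))))
     else if n mod 10 = 1 then FLess (dec_trm (fst (prod_decode (n div 10))))
                                     (dec_trm (snd (prod_decode (n div 10))))
     else if n mod 10 = 2 then FMem (dec_trm (n div 10))
     else if n mod 10 = 3 then FNot (dec_fm (n div 10))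
     else if n mod 10 = 4 then FAnd (dec_fm (fst (prod_decode (n div 10))))
                                    (dec_fm (snd (prod_decode (n div 10))))
     else if n mod 10 = 5 then FOr (dec_fm (fst (prod_decode (n div 10))))
                                   (dec_fm (snd (prod_decode (n div 10))))
     else if n mod 10 = 6 then FEx (dec_fm (n div 10))
     else if n mod 10 = 7 then FAll (dec_fm (n div 10))
     else if n mod 10 = 8 then FBEx (dec_trm (fst (prod_decode (n div 10))))
                                    (dec_fm (snd (prod_decode (n div 10))))
     else FBAll (dec_trm (fst (prod_decode (n div 10))))
                (dec_fm (snd (prod_decode (n div 10)))))"
  by pat_completeness auto
termination
  by (relation "Wellfounded.measure id") (auto simp: div10_less decode_fst_less decode_snd_less)

definition W :: "nat \<Rightarrow> nat set" where
  "W k = (if sigma1 (dec_fm k) then {x. sat {} (case_nat x (\<lambda>_. 0)) (dec_fm k)} else {})"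

text \<open>Standard (canonical) numbering of finite sets: D n = set of positions of 1-bits of n.\<close>
definition D :: "nat \<Rightarrow> nat set" where
  "D n = {i. odd (n div 2 ^ i)}"

definition checkD :: "nat \<Rightarrow> nat set set" where
  "checkD n = {A. D n \<subseteq> A}"

definition scott_topology :: "nat set topology" where
  "scott_topology = topology_generated_by (range checkD)"

definition U :: "nat \<Rightarrow> nat set set" where
  "U k = (\<Union>n\<in>W k. checkD n)"

definition tup3 :: "nat \<Rightarrow> nat \<Rightarrow> nat \<Rightarrow> nat" where
  "tup3 m i j = prod_encode (m, prod_encode (i, j))"

definition pi_set :: "nat \<Rightarrow> nat set set" where
  "pi_set m = {A. \<forall>i. A \<in> U (tup3 m i 0) \<longrightarrow> A \<in> U (tup3 m i 1)}"

definition pi_top :: "nat \<Rightarrow> nat set topology" where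
  "pi_top m = subtopology scott_topology (pi_set m)"

definition Pi11 :: "nat set \<Rightarrow> bool" where
  "Pi11 A \<longleftrightarrow> (\<exists>\<phi>. \<forall>m. m \<in> A \<longleftrightarrow> (\<forall>X. sat X (case_nat m (\<lambda>_. 0)) \<phi>))"

end

(*
  Every subspace S of P\<omega> is T0 and second countable, so by Urysohn's metrization theorem
  metrisability of S is equivalent to regularity. T1, Hausdorff and regular are each expressed
  through the basic open sets by quantifiers over points of S, i.e. over subsets of \<omega>, and over
  codes of finite sets; choice moves the set quantifiers in front of the number quantifiers.
  The remaining matrix is arithmetical in membership in S = pi_set m, which depends on the truth
  of the \<Sigma>\<^sub>1 formulas defining the c.e. sets W k. Truth is not arithmetical, but it is the unique
  solution of arithmetical recursion clauses along Goedel codes, so it can be quantified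
  universally as one further set.
*)

theory Submission
  imports Defs
begin

section \<open>Arithmetically definable predicates\<close>

abbreviation pair :: "nat \<Rightarrow> nat \<Rightarrow> nat" where
  "pair a b \<equiv> prod_encode (a, b)"

fun rename_trm :: "(nat \<Rightarrow> nat) \<Rightarrow> trm \<Rightarrow> trm" where
  "rename_trm f (TVar i) = TVar (f i)"
| "rename_trm f TZero = TZero"
| "rename_trm f (TSuc t) = TSuc (rename_trm f t)"
| "rename_trm f (TPlus s t) = TPlus (rename_trm f s) (rename_trm f t)"
| "rename_trm f (TTimes s t) = TTimes (rename_trm f s) (rename_trm f t)"

lemma tval_rename_trm [simp]: "tval e (rename_trm f t) = tval (\<lambda>i. e (f i)) t"
  by (induction t) auto

fun rename_fm :: "(nat \<Rightarrow> nat) \<Rightarrow> fm \<Rightarrow> fm" where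
  "rename_fm f (FEq s t) = FEq (rename_trm f s) (rename_trm f t)"
| "rename_fm f (FLess s t) = FLess (rename_trm f s) (rename_trm f t)"
| "rename_fm f (FMem t) = FMem (rename_trm f t)"
| "rename_fm f (FNot \<phi>) = FNot (rename_fm f \<phi>)"
| "rename_fm f (FAnd \<phi> \<psi>) = FAnd (rename_fm f \<phi>) (rename_fm f \<psi>)"
| "rename_fm f (FOr \<phi> \<psi>) = FOr (rename_fm f \<phi>) (rename_fm f \<psi>)"
| "rename_fm f (FEx \<phi>) = FEx (rename_fm (case_nat 0 (Suc \<circ> f)) \<phi>)"
| "rename_fm f (FAll \<phi>) = FAll (rename_fm (case_nat 0 (Suc \<circ> f)) \<phi>)"
| "rename_fm f (FBEx t \<phi>) = FBEx (rename_trm f t) (rename_fm (case_nat 0 (Suc \<circ> f)) \<phi>)"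
| "rename_fm f (FBAll t \<phi>) = FBAll (rename_trm f t) (rename_fm (case_nat 0 (Suc \<circ> f)) \<phi>)"

lemma case_nat_shift: "(\<lambda>i. case_nat v e (case_nat 0 (Suc \<circ> f) i)) = case_nat v (\<lambda>i. e (f i))"
  by (rule ext) (simp split: nat.split)

lemma sat_rename_fm [simp]: "sat X e (rename_fm f \<phi>) = sat X (\<lambda>i. e (f i)) \<phi>"
  by (induction \<phi> arbitrary: e f) (simp_all add: case_nat_shift)

definition definable :: "((nat \<Rightarrow> nat) \<Rightarrow> nat set \<Rightarrow> bool) \<Rightarrow> bool" where
  "definable P \<longleftrightarrow> (\<exists>\<phi>. \<forall>X e. sat X e \<phi> = P e X)"

lemma definable_cong: "definable P \<Longrightarrow> (\<And>e X. P e X = Q e X) \<Longrightarrow> definable Q"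
  unfolding definable_def by metis

lemma definable_True: "definable (\<lambda>e X. True)"
  unfolding definable_def by (rule exI[of _ "FEq TZero TZero"]) simp

lemma definable_False: "definable (\<lambda>e X. False)"
  unfolding definable_def by (rule exI[of _ "FLess TZero TZero"]) simp

lemma definable_not: "definable P \<Longrightarrow> definable (\<lambda>e X. \<not> P e X)"
  unfolding definable_def by (metis sat.simps(4))

lemma definable_conj: "definable P \<Longrightarrow> definable Q \<Longrightarrow> definable (\<lambda>e X. P e X \<and> Q e X)"
  unfolding definable_def by (metis sat.simps(5))

lemma definable_disj: "definable P \<Longrightarrow> definable Q \<Longrightarrow> definable (\<lambda>e X. P e X \<or> Q e X)"
  unfolding definable_def by (metis sat.simps(6))

lemma definable_imp: "definable P \<Longrightarrow> definable Q \<Longrightarrow> definable (\<lambda>e X. P e X \<longrightarrow> Q e X)"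
  by (rule definable_cong[OF definable_disj[OF definable_not]]) auto

lemma definable_iff:
  assumes "definable P" and "definable Q"
  shows "definable (\<lambda>e X. P e X \<longleftrightarrow> Q e X)"
proof -
  have "definable (\<lambda>e X. (P e X \<longrightarrow> Q e X) \<and> (Q e X \<longrightarrow> P e X))"
    using assms by (intro definable_conj definable_imp)
  then show ?thesis by (rule definable_cong) auto
qed

lemma definable_if:
  assumes "definable P" and "definable Q" and "definable R"
  shows "definable (\<lambda>e X. if P e X then Q e X else R e X)"
proof -
  have "definable (\<lambda>e X. (P e X \<and> Q e X) \<or> (\<not> P e X \<and> R e X))"
    using assms by (intro definable_disj definable_conj definable_not)
  then show ?thesis by (rule definable_cong) auto
qed

lemma definable_ex:
  assumes "definable (\<lambda>e X. P (e 0) (\<lambda>i. e (Suc i)) X)"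
  shows "definable (\<lambda>e X. \<exists>v. P v e X)"
proof -
  obtain \<phi> where "\<And>X e. sat X e \<phi> = P (e 0) (\<lambda>i. e (Suc i)) X"
    using assms unfolding definable_def by blast
  then have "\<forall>X e. sat X e (FEx \<phi>) = (\<exists>v. P v e X)" by simp
  then show ?thesis unfolding definable_def by blast
qed

lemma definable_all:
  assumes "definable (\<lambda>e X. P (e 0) (\<lambda>i. e (Suc i)) X)"
  shows "definable (\<lambda>e X. \<forall>v. P v e X)"
  using definable_not[OF definable_ex[OF definable_not[OF assms]]] by (rule definable_cong) simp

lemma definable_rename: "definable P \<Longrightarrow> definable (\<lambda>e X. P (\<lambda>i. e (f i)) X)"
  unfolding definable_def by (metis sat_rename_fm)

definition term_definable :: "((nat \<Rightarrow> nat) \<Rightarrow> nat) \<Rightarrow> bool" where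
  "term_definable F \<longleftrightarrow> (\<exists>t. \<forall>e. tval e t = F e)"

lemma term_definable_var: "term_definable (\<lambda>e. e i)"
  unfolding term_definable_def by (metis tval.simps(1))

lemma term_definable_Suc: "term_definable F \<Longrightarrow> term_definable (\<lambda>e. Suc (F e))"
  unfolding term_definable_def by (metis tval.simps(3))

lemma term_definable_const: "term_definable (\<lambda>e. c)"
proof (induction c)
  case 0
  show ?case unfolding term_definable_def by (metis tval.simps(2))
qed (rule term_definable_Suc)

lemma term_definable_plus: "term_definable F \<Longrightarrow> term_definable G \<Longrightarrow> term_definable (\<lambda>e. F e + G e)"
  unfolding term_definable_def by (metis tval.simps(4))

lemma term_definable_times: "term_definable F \<Longrightarrow> term_definable G \<Longrightarrow> term_definable (\<lambda>e. F e * G e)"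
  unfolding term_definable_def by (metis tval.simps(5))

lemmas term_definable_intros =
  term_definable_var term_definable_const term_definable_Suc term_definable_plus
  term_definable_times

lemma definable_term_eq: "term_definable F \<Longrightarrow> term_definable G \<Longrightarrow> definable (\<lambda>e X. F e = G e)"
  unfolding term_definable_def definable_def by (metis sat.simps(1))

lemma definable_term_less: "term_definable F \<Longrightarrow> term_definable G \<Longrightarrow> definable (\<lambda>e X. F e < G e)"
  unfolding term_definable_def definable_def by (metis sat.simps(2))

lemma definable_term_mem: "term_definable F \<Longrightarrow> definable (\<lambda>e X. F e \<in> X)"
  unfolding term_definable_def definable_def by (metis sat.simps(3))

definition definable_fun :: "((nat \<Rightarrow> nat) \<Rightarrow> nat) \<Rightarrow> bool" where
  "definable_fun F \<longleftrightarrow> definable (\<lambda>e X. e 0 = F (\<lambda>i. e (Suc i)))"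

lemma definable_fun_rename: "definable_fun F \<Longrightarrow> definable_fun (\<lambda>e. F (\<lambda>i. e (f i)))"
  unfolding definable_fun_def
  by (rule definable_cong[OF definable_rename[where f="case_nat 0 (\<lambda>i. Suc (f i))"]]) auto

lemma definable_subst:
  assumes "definable_fun F" and "definable (\<lambda>e X. P (e 0) (\<lambda>i. e (Suc i)) X)"
  shows "definable (\<lambda>e X. P (F e) e X)"
proof -
  have "definable (\<lambda>e X. \<exists>v. v = F e \<and> P v e X)"
    using assms unfolding definable_fun_def by (intro definable_ex definable_conj)
  then show ?thesis by (rule definable_cong) auto
qed

lemma definable_fun_term: "term_definable F \<Longrightarrow> definable_fun F"
  unfolding definable_fun_def
  by (intro definable_term_eq term_definable_var)
    (simp add: term_definable_def, metis tval_rename_trm)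

lemma definable_subst2:
  assumes F: "definable_fun F" and G: "definable_fun G"
    and P: "definable (\<lambda>e X. P (e 0) (e 1) (\<lambda>i. e (Suc (Suc i))) X)"
  shows "definable (\<lambda>e X. P (F e) (G e) e X)"
proof -
  have "definable (\<lambda>e X. P (e 1) (e 0) (\<lambda>i. e (Suc (Suc i))) X)"
    using definable_rename[OF P, of "\<lambda>i. if i = 0 then 1 else if i = 1 then 0 else i"]
    by (rule definable_cong) simp
  then have "definable (\<lambda>e X. P (e 0) (G (\<lambda>i. e (Suc i))) (\<lambda>i. e (Suc i)) X)"
    using definable_subst[OF definable_fun_rename[OF G, where f=Suc],
        of "\<lambda>w e X. P (e 0) w (\<lambda>i. e (Suc i)) X"]
    by simp
  then show ?thesis
    using definable_subst[OF F, of "\<lambda>v e X. P v (G e) e X"] by simp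
qed

lemma definable_eq:
  assumes "definable_fun F" and "definable_fun G"
  shows "definable (\<lambda>e X. F e = G e)"
  using assms by (rule definable_subst2[where P="\<lambda>a b e X. a = b"])
    (intro definable_term_eq term_definable_var)

lemma definable_less:
  assumes "definable_fun F" and "definable_fun G"
  shows "definable (\<lambda>e X. F e < G e)"
  using assms by (rule definable_subst2[where P="\<lambda>a b e X. a < b"])
    (intro definable_term_less term_definable_var)

lemma definable_le:
  assumes "definable_fun F" and "definable_fun G"
  shows "definable (\<lambda>e X. F e \<le> G e)"
  using definable_not[OF definable_less[OF assms(2,1)]] by (rule definable_cong) auto

lemma definable_mem:
  assumes "definable_fun F"
  shows "definable (\<lambda>e X. F e \<in> X)"
  using assms by (rule definable_subst[where P="\<lambda>v e X. v \<in> X"])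
    (intro definable_term_mem term_definable_var)

lemma definable_fun_comp2:
  assumes h: "definable (\<lambda>e X. e 0 = h (e 1) (e 2))"
    and F: "definable_fun F" and G: "definable_fun G"
  shows "definable_fun (\<lambda>e. h (F e) (G e))"
proof -
  have "definable (\<lambda>e X. e 2 = h (e 0) (e 1))"
    using definable_rename[OF h, of "\<lambda>i. if i = 0 then 2 else if i = 1 then 0 else 1"]
    by (rule definable_cong) simp
  then have "definable (\<lambda>e X. e 0 = h (F (\<lambda>i. e (Suc i))) (G (\<lambda>i. e (Suc i))))"
    using definable_subst2[OF definable_fun_rename[OF F, where f=Suc]
        definable_fun_rename[OF G, where f=Suc], where P="\<lambda>a b e X. e 0 = h a b"]
    by (simp add: numeral_2_eq_2)
  then show ?thesis unfolding definable_fun_def .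
qed

lemma definable_fun_comp1:
  assumes "definable (\<lambda>e X. e 0 = h (e 1))" and "definable_fun F"
  shows "definable_fun (\<lambda>e. h (F e))"
  using definable_fun_comp2[where h="\<lambda>a b. h a" and G="\<lambda>e. 0"] assms
  by (simp add: definable_fun_term term_definable_const)

lemma definable_fun_var: "definable_fun (\<lambda>e. e i)"
  by (intro definable_fun_term term_definable_var)

lemma definable_fun_const: "definable_fun (\<lambda>e. c)"
  by (intro definable_fun_term term_definable_const)

lemma definable_fun_Suc: "definable_fun F \<Longrightarrow> definable_fun (\<lambda>e. Suc (F e))"
  by (rule definable_fun_comp1) (intro definable_term_eq term_definable_intros)

lemma definable_fun_plus: "definable_fun F \<Longrightarrow> definable_fun G \<Longrightarrow> definable_fun (\<lambda>e. F e + G e)"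
  by (rule definable_fun_comp2) (intro definable_term_eq term_definable_intros)

lemma definable_fun_times: "definable_fun F \<Longrightarrow> definable_fun G \<Longrightarrow> definable_fun (\<lambda>e. F e * G e)"
  by (rule definable_fun_comp2) (intro definable_term_eq term_definable_intros)

lemma pair_eq_iff: "c = pair a b \<longleftrightarrow> 2 * c = (a + b) * Suc (a + b) + 2 * a"
proof -
  have "2 * triangle (a + b) = (a + b) * Suc (a + b)"
    unfolding triangle_def by simp
  then have "2 * pair a b = (a + b) * Suc (a + b) + 2 * a"
    by (simp add: prod_encode_def)
  then show ?thesis by auto
qed

lemma definable_fun_pair: "definable_fun F \<Longrightarrow> definable_fun G \<Longrightarrow> definable_fun (\<lambda>e. pair (F e) (G e))"
  by (rule definable_fun_comp2[where h=pair], unfold pair_eq_iff)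
    (intro definable_term_eq term_definable_intros)

lemmas definable_intros =
  definable_True definable_False definable_not definable_conj definable_disj definable_imp
  definable_iff definable_if definable_ex definable_all definable_eq definable_less definable_le
  definable_mem

lemmas definable_fun_basic_intros =
  definable_fun_var definable_fun_const definable_fun_Suc definable_fun_plus definable_fun_times
  definable_fun_pair

lemma definable_fun_fst_decode: "definable_fun F \<Longrightarrow> definable_fun (\<lambda>e. fst (prod_decode (F e)))"
proof (rule definable_fun_comp1[where h="\<lambda>c. fst (prod_decode c)"])
  have "definable (\<lambda>e X. \<exists>b. e 1 = pair (e 0) b)"
    by (intro definable_intros definable_fun_basic_intros)
  then show "definable (\<lambda>e X. e 0 = fst (prod_decode (e 1)))"
    by (rule definable_cong) (metis fst_conv prod.collapse prod_decode_inverse prod_encode_inverse)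
qed

lemma definable_fun_snd_decode: "definable_fun F \<Longrightarrow> definable_fun (\<lambda>e. snd (prod_decode (F e)))"
proof (rule definable_fun_comp1[where h="\<lambda>c. snd (prod_decode c)"])
  have "definable (\<lambda>e X. \<exists>a. e 1 = pair a (e 0))"
    by (intro definable_intros definable_fun_basic_intros)
  then show "definable (\<lambda>e X. e 0 = snd (prod_decode (e 1)))"
    by (rule definable_cong) (metis snd_conv prod.collapse prod_decode_inverse prod_encode_inverse)
qed

lemma div_eq_iff: "q = a div c \<longleftrightarrow> c = 0 \<and> q = 0 \<or> (\<exists>r < c. a = q * c + r)"
  for a c q :: nat
proof (cases "c = 0")
  case False
  then have "(\<exists>r < c. a = q * c + r) \<longleftrightarrow> q = a div c"
    by (metis add.commute div_mult_self1 div_mult_mod_eq div_less add_0_right mod_less_divisor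
        neq0_conv)
  with False show ?thesis by simp
qed simp

lemma mod_eq_iff: "r = a mod c \<longleftrightarrow> c = 0 \<and> r = a \<or> r < c \<and> (\<exists>q. a = q * c + r)"
  for a c r :: nat
proof (cases "c = 0")
  case False
  then have "(r < c \<and> (\<exists>q. a = q * c + r)) \<longleftrightarrow> r = a mod c"
    by (metis mod_less_divisor mod_mult_self3 mod_less neq0_conv div_mult_mod_eq)
  with False show ?thesis by simp
qed simp

lemma definable_fun_div: "definable_fun F \<Longrightarrow> definable_fun G \<Longrightarrow> definable_fun (\<lambda>e. F e div G e)"
  by (rule definable_fun_comp2[where h="(div)"], unfold div_eq_iff)
    (intro definable_intros definable_fun_basic_intros)

lemma definable_fun_mod: "definable_fun F \<Longrightarrow> definable_fun G \<Longrightarrow> definable_fun (\<lambda>e. F e mod G e)"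
  by (rule definable_fun_comp2[where h="(mod)"], unfold mod_eq_iff)
    (intro definable_intros definable_fun_basic_intros)

lemmas definable_fun_intros =
  definable_fun_basic_intros definable_fun_fst_decode definable_fun_snd_decode
  definable_fun_div definable_fun_mod


section \<open>The truth relation of first-order arithmetic\<close>

declare dec_trm.simps [simp del] dec_fm.simps [simp del]

abbreviation sub_code :: "nat \<Rightarrow> nat" where
  "sub_code n \<equiv> n div 10"

abbreviation left_code :: "nat \<Rightarrow> nat" where
  "left_code n \<equiv> fst (prod_decode (n div 10))"

abbreviation right_code :: "nat \<Rightarrow> nat" where
  "right_code n \<equiv> snd (prod_decode (n div 10))"

lemma ex_pair: "\<exists>a b. y = pair a b"
  by (metis prod.collapse prod_decode_inverse)

lemma mod_10_cases:
  fixes n :: nat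
  obtains "n mod 10 = 0" | "n mod 10 = 1" | "n mod 10 = 2" | "n mod 10 = 3" | "n mod 10 = 4"
    | "n mod 10 = 5" | "n mod 10 = 6" | "n mod 10 = 7" | "n mod 10 = 8" | "n mod 10 = 9"
proof -
  have "k < 10 \<Longrightarrow> k = 0 \<or> k = 1 \<or> k = 2 \<or> k = 3 \<or> k = 4 \<or> k = 5 \<or> k = 6 \<or> k = 7 \<or> k = 8 \<or> k = 9"
    for k :: nat
    by (simp add: less_Suc_eq numeral_eq_Suc)
  from this[of "n mod 10"] show ?thesis
    using that by fastforce
qed

function decode_env :: "nat \<Rightarrow> nat \<Rightarrow> nat" where
  "decode_env 0 = (\<lambda>_. 0)"
| "decode_env (Suc c) = case_nat (fst (prod_decode c)) (decode_env (snd (prod_decode c)))"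
  by pat_completeness auto
termination
proof (relation "Wellfounded.measure id")
  fix c
  have "snd (prod_decode c) \<le> prod_encode (prod_decode c)"
    by (metis le_prod_encode_2 prod.collapse)
  then show "(snd (prod_decode c), Suc c) \<in> Wellfounded.measure id" by simp
qed simp

declare decode_env.simps(2) [simp del]

lemma decode_env_Suc_pair [simp]: "decode_env (Suc (pair a c)) = case_nat a (decode_env c)"
  by (simp add: decode_env.simps(2))

text \<open>A relation \<open>T\<close> bundles six relations \<open>T 0, \<dots>, T 5\<close>: environment lookup, values of
  terms, truth of formulas with the set variable read as \<open>{}\<close> (as in \<open>W\<close>), the predicates
  \<open>delta0\<close> and \<open>sigma1\<close> on codes, and membership in \<open>D n\<close>. Each of them is the unique
  solution of a recursion along codes; the recursion equations are arithmetical in \<open>T\<close>.\<close>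

definition env_clauses :: "(nat \<Rightarrow> nat \<Rightarrow> bool) \<Rightarrow> bool" where
  "env_clauses T \<longleftrightarrow> (\<forall>c i v. T 0 (pair c (pair i v)) \<longleftrightarrow>
     c = 0 \<and> v = 0 \<or>
     (\<exists>a c'. c = Suc (pair a c') \<and> (i = 0 \<and> v = a \<or> (\<exists>j. i = Suc j \<and> T 0 (pair c' (pair j v))))))"

definition term_clauses :: "(nat \<Rightarrow> nat \<Rightarrow> bool) \<Rightarrow> bool" where
  "term_clauses T \<longleftrightarrow> (\<forall>t c v. T 1 (pair t (pair c v)) \<longleftrightarrow>
     (if t mod 10 = 0 then T 0 (pair c (pair (sub_code t) v))
      else if t mod 10 = 1 then v = 0
      else if t mod 10 = 2 then (\<exists>w. T 1 (pair (sub_code t) (pair c w)) \<and> v = Suc w)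
      else if t mod 10 = 3 then (\<exists>w1 w2. T 1 (pair (left_code t) (pair c w1)) \<and>
        T 1 (pair (right_code t) (pair c w2)) \<and> v = w1 + w2)
      else (\<exists>w1 w2. T 1 (pair (left_code t) (pair c w1)) \<and>
        T 1 (pair (right_code t) (pair c w2)) \<and> v = w1 * w2)))"

definition sat_clauses :: "(nat \<Rightarrow> nat \<Rightarrow> bool) \<Rightarrow> bool" where
  "sat_clauses T \<longleftrightarrow> (\<forall>n c. T 2 (pair n c) \<longleftrightarrow>
     (if n mod 10 = 0 then (\<exists>v w. T 1 (pair (left_code n) (pair c v)) \<and>
        T 1 (pair (right_code n) (pair c w)) \<and> v = w)
      else if n mod 10 = 1 then (\<exists>v w. T 1 (pair (left_code n) (pair c v)) \<and>
        T 1 (pair (right_code n) (pair c w)) \<and> v < w)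
      else if n mod 10 = 2 then False
      else if n mod 10 = 3 then \<not> T 2 (pair (sub_code n) c)
      else if n mod 10 = 4 then T 2 (pair (left_code n) c) \<and> T 2 (pair (right_code n) c)
      else if n mod 10 = 5 then T 2 (pair (left_code n) c) \<or> T 2 (pair (right_code n) c)
      else if n mod 10 = 6 then (\<exists>v. T 2 (pair (sub_code n) (Suc (pair v c))))
      else if n mod 10 = 7 then (\<forall>v. T 2 (pair (sub_code n) (Suc (pair v c))))
      else if n mod 10 = 8 then (\<exists>w. T 1 (pair (left_code n) (pair c w)) \<and>
        (\<exists>v. v < w \<and> T 2 (pair (right_code n) (Suc (pair v c)))))
      else (\<exists>w. T 1 (pair (left_code n) (pair c w)) \<and>
        (\<forall>v. v < w \<longrightarrow> T 2 (pair (right_code n) (Suc (pair v c)))))))"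

definition delta0_clauses :: "(nat \<Rightarrow> nat \<Rightarrow> bool) \<Rightarrow> bool" where
  "delta0_clauses T \<longleftrightarrow> (\<forall>n. T 3 n \<longleftrightarrow>
     (if n mod 10 = 0 \<or> n mod 10 = 1 then True
      else if n mod 10 = 3 then T 3 (sub_code n)
      else if n mod 10 = 4 \<or> n mod 10 = 5 then T 3 (left_code n) \<and> T 3 (right_code n)
      else if n mod 10 = 8 \<or> n mod 10 = 9 then T 3 (right_code n)
      else False))"

definition sigma1_clauses :: "(nat \<Rightarrow> nat \<Rightarrow> bool) \<Rightarrow> bool" where
  "sigma1_clauses T \<longleftrightarrow> (\<forall>n. T 4 n \<longleftrightarrow> T 3 n \<or> n mod 10 = 6 \<and> T 4 (sub_code n))"

definition bit_clauses :: "(nat \<Rightarrow> nat \<Rightarrow> bool) \<Rightarrow> bool" where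
  "bit_clauses T \<longleftrightarrow> (\<forall>n i. T 5 (pair n i) \<longleftrightarrow>
     (if i = 0 then n mod 2 = 1 else (\<exists>j. i = Suc j \<and> T 5 (pair (n div 2) j))))"

definition truth_clauses :: "(nat \<Rightarrow> nat \<Rightarrow> bool) \<Rightarrow> bool" where
  "truth_clauses T \<longleftrightarrow> env_clauses T \<and> term_clauses T \<and> sat_clauses T \<and> delta0_clauses T \<and>
     sigma1_clauses T \<and> bit_clauses T \<and> (\<forall>j y. T j y \<longrightarrow> j \<le> 5)"

definition truth :: "nat \<Rightarrow> nat \<Rightarrow> bool" where
  "truth j y \<longleftrightarrow>
    (let (a, b) = prod_decode y; (b1, b2) = prod_decode b in
     if j = 0 then b2 = decode_env a b1
     else if j = 1 then b2 = tval (decode_env b1) (dec_trm a)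
     else if j = 2 then sat {} (decode_env b) (dec_fm a)
     else if j = 3 then delta0 (dec_fm y)
     else if j = 4 then sigma1 (dec_fm y)
     else if j = 5 then b \<in> D a
     else False)"

lemma truth_simps [simp]:
  "truth 0 (pair c (pair i v)) \<longleftrightarrow> v = decode_env c i"
  "truth 1 (pair t (pair c v)) \<longleftrightarrow> v = tval (decode_env c) (dec_trm t)"
  "truth 2 (pair n c) \<longleftrightarrow> sat {} (decode_env c) (dec_fm n)"
  "truth 3 n \<longleftrightarrow> delta0 (dec_fm n)"
  "truth 4 n \<longleftrightarrow> sigma1 (dec_fm n)"
  "truth 5 (pair n i) \<longleftrightarrow> i \<in> D n"
  "5 < j \<Longrightarrow> \<not> truth j y"
  by (simp_all add: truth_def)

lemma env_clauses_unique:
  assumes "env_clauses T"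
  shows "T 0 (pair c (pair i v)) \<longleftrightarrow> v = decode_env c i"
proof (induction c arbitrary: i v rule: less_induct)
  case (less c)
  note clause = assms[unfolded env_clauses_def, rule_format, of c i v]
  show ?case
  proof (cases c)
    case (Suc c0)
    then obtain a c' where c: "c = Suc (pair a c')"
      using ex_pair by blast
    then have "c' < c"
      using le_prod_encode_2[of c' a] by simp
    then show ?thesis
      using clause c less.IH by (cases i) auto
  qed (use clause in simp)
qed

lemma term_clauses_unique:
  assumes "env_clauses T" and "term_clauses T"
  shows "T 1 (pair t (pair c v)) \<longleftrightarrow> v = tval (decode_env c) (dec_trm t)"
proof (induction t arbitrary: v rule: less_induct)
  case (less t)
  note clause = assms(2)[unfolded term_clauses_def, rule_format, of t c v]
  have IH: "T 1 (pair u (pair c w)) \<longleftrightarrow> w = tval (decode_env c) (dec_trm u)"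
    if "t mod 10 \<noteq> 0" and "u \<in> {sub_code t, left_code t, right_code t}" for u w
    using that less.IH div10_less decode_fst_less decode_snd_less by blast
  show ?case
    by (cases t rule: mod_10_cases)
      (use clause IH env_clauses_unique[OF assms(1)] in \<open>simp_all add: dec_trm.simps[of t]\<close>)
qed

lemma sat_clauses_unique:
  assumes "env_clauses T" and "term_clauses T" and "sat_clauses T"
  shows "T 2 (pair n c) \<longleftrightarrow> sat {} (decode_env c) (dec_fm n)"
proof (induction n arbitrary: c rule: less_induct)
  case (less n)
  note clause = assms(3)[unfolded sat_clauses_def, rule_format, of n c]
  have IH: "T 2 (pair u c') \<longleftrightarrow> sat {} (decode_env c') (dec_fm u)"
    if "n mod 10 \<noteq> 0" and "u \<in> {sub_code n, left_code n, right_code n}" for u c'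
    using that less.IH div10_less decode_fst_less decode_snd_less by blast
  show ?case
    by (cases n rule: mod_10_cases)
      (use clause IH term_clauses_unique[OF assms(1,2)] in \<open>simp_all add: dec_fm.simps[of n]\<close>)
qed

lemma delta0_simps [simp]:
  "delta0 (FEq s t)" "delta0 (FLess s t)" "\<not> delta0 (FMem t)"
  "delta0 (FNot \<phi>) \<longleftrightarrow> delta0 \<phi>" "delta0 (FAnd \<phi> \<psi>) \<longleftrightarrow> delta0 \<phi> \<and> delta0 \<psi>"
  "delta0 (FOr \<phi> \<psi>) \<longleftrightarrow> delta0 \<phi> \<and> delta0 \<psi>" "\<not> delta0 (FEx \<phi>)" "\<not> delta0 (FAll \<phi>)"
  "delta0 (FBEx t \<phi>) \<longleftrightarrow> delta0 \<phi>" "delta0 (FBAll t \<phi>) \<longleftrightarrow> delta0 \<phi>"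
  by (auto intro: delta0.intros elim: delta0.cases)

lemma delta0_dec_fm:
  "delta0 (dec_fm n) \<longleftrightarrow>
     (if n mod 10 = 0 \<or> n mod 10 = 1 then True
      else if n mod 10 = 3 then delta0 (dec_fm (sub_code n))
      else if n mod 10 = 4 \<or> n mod 10 = 5 then
        delta0 (dec_fm (left_code n)) \<and> delta0 (dec_fm (right_code n))
      else if n mod 10 = 8 \<or> n mod 10 = 9 then delta0 (dec_fm (right_code n))
      else False)"
  by (cases n rule: mod_10_cases) (simp_all add: dec_fm.simps[of n])

lemma sigma1_dec_fm:
  "sigma1 (dec_fm n) \<longleftrightarrow> delta0 (dec_fm n) \<or> n mod 10 = 6 \<and> sigma1 (dec_fm (sub_code n))"
  by (subst sigma1.simps) (cases n rule: mod_10_cases; simp add: dec_fm.simps[of n])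

lemma delta0_clauses_unique:
  assumes "delta0_clauses T"
  shows "T 3 n \<longleftrightarrow> delta0 (dec_fm n)"
proof (induction n rule: less_induct)
  case (less n)
  have IH: "T 3 u \<longleftrightarrow> delta0 (dec_fm u)"
    if "n mod 10 \<noteq> 0" and "u \<in> {sub_code n, left_code n, right_code n}" for u
    using that less.IH div10_less decode_fst_less decode_snd_less by blast
  note clause = assms[unfolded delta0_clauses_def, rule_format, of n]
  show ?case
    by (cases n rule: mod_10_cases) (use clause IH in \<open>simp_all add: delta0_dec_fm[of n]\<close>)
qed

lemma sigma1_clauses_unique:
  assumes "delta0_clauses T" and "sigma1_clauses T"
  shows "T 4 n \<longleftrightarrow> sigma1 (dec_fm n)"
proof (induction n rule: less_induct)
  case (less n)
  note clause = assms(2)[unfolded sigma1_clauses_def, rule_format, of n]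
  moreover have "n mod 10 = 6 \<Longrightarrow> T 4 (sub_code n) \<longleftrightarrow> sigma1 (dec_fm (sub_code n))"
    using less.IH div10_less by simp
  ultimately show ?case
    using delta0_clauses_unique[OF assms(1)] sigma1_dec_fm[of n] by blast
qed

lemma bit_clauses_unique:
  assumes "bit_clauses T"
  shows "T 5 (pair n i) \<longleftrightarrow> i \<in> D n"
proof (induction i arbitrary: n)
  case 0
  then show ?case
    using assms by (simp add: bit_clauses_def D_def odd_iff_mod_2_eq_one)
next
  case (Suc j)
  then show ?case
    using assms by (simp add: bit_clauses_def D_def div_mult2_eq)
qed

lemma truth_clauses_truth: "truth_clauses truth"
  unfolding truth_clauses_def
proof (intro conjI allI impI)
  show "env_clauses truth"
    unfolding env_clauses_def truth_simps
  proof (intro allI)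
    fix c i v
    show "v = decode_env c i \<longleftrightarrow> c = 0 \<and> v = 0 \<or>
      (\<exists>a c'. c = Suc (pair a c') \<and> (i = 0 \<and> v = a \<or> (\<exists>j. i = Suc j \<and> v = decode_env c' j)))"
    proof (cases c)
      case (Suc c0)
      then obtain a c' where "c = Suc (pair a c')"
        using ex_pair by blast
      then show ?thesis by (cases i) auto
    qed simp
  qed
  show "term_clauses truth"
    unfolding term_clauses_def truth_simps
    apply (intro allI)
    subgoal for t c v by (cases t rule: mod_10_cases) (simp_all add: dec_trm.simps[of t])
    done
  show "sat_clauses truth"
    unfolding sat_clauses_def truth_simps
    apply (intro allI)
    subgoal for n c by (cases n rule: mod_10_cases) (simp_all add: dec_fm.simps[of n])
    done
  show "delta0_clauses truth"
    unfolding delta0_clauses_def truth_simps using delta0_dec_fm by blast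
  show "sigma1_clauses truth"
    unfolding sigma1_clauses_def truth_simps using sigma1_dec_fm by blast
  show "bit_clauses truth"
    unfolding bit_clauses_def truth_simps
    by (intro allI, case_tac i) (simp_all add: D_def odd_iff_mod_2_eq_one div_mult2_eq)
  show "truth j y \<Longrightarrow> j \<le> 5" for j y
    using truth_simps(7) not_le by blast
qed

text \<open>The clauses pin down \<open>truth\<close>; this is what makes truth (for all formulas, not just
  bounded ones) expressible by a universal set quantifier.\<close>

lemma truth_clauses_iff: "truth_clauses T \<longleftrightarrow> T = truth"
proof
  assume "truth_clauses T"
  then have env: "env_clauses T" and trm: "term_clauses T" and sat: "sat_clauses T"
    and d0: "delta0_clauses T" and s1: "sigma1_clauses T" and bit: "bit_clauses T"
    and support: "\<And>j y. T j y \<Longrightarrow> j \<le> 5"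
    unfolding truth_clauses_def by blast+
  show "T = truth"
  proof (intro ext)
    fix j y :: nat
    obtain a b1 b2 where y: "y = pair a (pair b1 b2)"
      by (metis ex_pair)
    consider "j = 0" | "j = 1" | "j = 2" | "j = 3" | "j = 4" | "j = 5" | "5 < j"
      by linarith
    then show "T j y \<longleftrightarrow> truth j y"
    proof cases
      case 7
      then show ?thesis using support[of j y] by auto
    qed (simp_all only: y truth_simps env_clauses_unique[OF env] term_clauses_unique[OF env trm]
        sat_clauses_unique[OF env trm sat] delta0_clauses_unique[OF d0]
        sigma1_clauses_unique[OF d0 s1] bit_clauses_unique[OF bit])
  qed
qed (simp add: truth_clauses_truth)


section \<open>A normal form for \<open>\<Pi>\<^sup>1\<^sub>1\<close> sets\<close>

definition codes_subset :: "(nat \<Rightarrow> nat \<Rightarrow> bool) \<Rightarrow> nat \<Rightarrow> nat set \<Rightarrow> bool" where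
  "codes_subset T n A \<longleftrightarrow> (\<forall>i. T 5 (pair n i) \<longrightarrow> i \<in> A)"

text \<open>\<open>Suc (pair n 0)\<close> codes the environment that assigns \<open>n\<close> to variable \<open>0\<close>.\<close>

definition in_U :: "(nat \<Rightarrow> nat \<Rightarrow> bool) \<Rightarrow> nat \<Rightarrow> nat set \<Rightarrow> bool" where
  "in_U T k A \<longleftrightarrow> (\<exists>n. T 4 k \<and> T 2 (pair k (Suc (pair n 0))) \<and> codes_subset T n A)"

definition in_pi :: "(nat \<Rightarrow> nat \<Rightarrow> bool) \<Rightarrow> nat \<Rightarrow> nat set \<Rightarrow> bool" where
  "in_pi T m A \<longleftrightarrow> (\<forall>i. in_U T (pair m (pair i 0)) A \<longrightarrow> in_U T (pair m (pair i 1)) A)"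

lemma codes_subset_truth [simp]: "codes_subset truth n A \<longleftrightarrow> D n \<subseteq> A"
  by (auto simp: codes_subset_def)

lemma in_U_truth [simp]: "in_U truth k A \<longleftrightarrow> A \<in> U k"
  by (auto simp: in_U_def U_def W_def checkD_def)

lemma in_pi_truth [simp]: "in_pi truth m A \<longleftrightarrow> A \<in> pi_set m"
  by (simp add: in_pi_def pi_set_def tup3_def)

definition slot :: "nat \<Rightarrow> nat set \<Rightarrow> nat set" where
  "slot j X = {y. pair j y \<in> X}"

lemma definable_truth_clauses: "definable (\<lambda>e X. truth_clauses (\<lambda>j y. pair j y \<in> slot 0 X))"
  unfolding truth_clauses_def env_clauses_def term_clauses_def sat_clauses_def delta0_clauses_def
    sigma1_clauses_def bit_clauses_def slot_def mem_Collect_eq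
  by (intro definable_intros definable_fun_intros)

text \<open>The set variable \<open>X\<close> of a \<open>\<Pi>\<^sup>1\<^sub>1\<close> formula is split into slots: slot \<open>0\<close> carries a
  candidate for the truth relation, slots \<open>1\<close> to \<open>4\<close> carry two sets, a sequence of sets
  and a double sequence of sets.\<close>

lemma ex_slots:
  "\<exists>X. (\<lambda>j y. pair j y \<in> slot 0 X) = T \<and> slot 1 X = A \<and> slot 2 X = B \<and>
    (\<lambda>k. slot k (slot 3 X)) = Bs \<and> (\<lambda>k j. slot j (slot k (slot 4 X))) = Cs"
proof
  let ?X = "{pair 0 (pair j y) | j y. T j y} \<union> {pair 1 y | y. y \<in> A} \<union> {pair 2 y | y. y \<in> B} \<union>
    {pair 3 (pair k y) | k y. y \<in> Bs k} \<union> {pair 4 (pair k (pair j y)) | k j y. y \<in> Cs k j}"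
  show "(\<lambda>j y. pair j y \<in> slot 0 ?X) = T \<and> slot 1 ?X = A \<and> slot 2 ?X = B \<and>
      (\<lambda>k. slot k (slot 3 ?X)) = Bs \<and> (\<lambda>k j. slot j (slot k (slot 4 ?X))) = Cs"
    by (auto simp: slot_def)
qed

lemma Pi11_if_definable:
  assumes "definable (\<lambda>e X. Q (e 0) (\<lambda>j y. pair j y \<in> slot 0 X) (slot 1 X) (slot 2 X)
    (\<lambda>k. slot k (slot 3 X)) (\<lambda>k j. slot j (slot k (slot 4 X))))"
  shows "Pi11 {m. \<forall>A B Bs Cs. Q m truth A B Bs Cs}"
proof -
  have "definable (\<lambda>e X. truth_clauses (\<lambda>j y. pair j y \<in> slot 0 X) \<longrightarrow>
    Q (e 0) (\<lambda>j y. pair j y \<in> slot 0 X) (slot 1 X) (slot 2 X)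
      (\<lambda>k. slot k (slot 3 X)) (\<lambda>k j. slot j (slot k (slot 4 X))))"
    using definable_truth_clauses assms by (rule definable_imp)
  then obtain \<phi> where \<phi>: "\<And>X e. sat X e \<phi> \<longleftrightarrow> (truth_clauses (\<lambda>j y. pair j y \<in> slot 0 X) \<longrightarrow>
    Q (e 0) (\<lambda>j y. pair j y \<in> slot 0 X) (slot 1 X) (slot 2 X)
      (\<lambda>k. slot k (slot 3 X)) (\<lambda>k j. slot j (slot k (slot 4 X))))"
    unfolding definable_def by blast
  have "(\<forall>X. sat X (case_nat m (\<lambda>_. 0)) \<phi>) \<longleftrightarrow> (\<forall>A B Bs Cs. Q m truth A B Bs Cs)" for m
  proof
    assume all_X: "\<forall>X. sat X (case_nat m (\<lambda>_. 0)) \<phi>"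
    show "\<forall>A B Bs Cs. Q m truth A B Bs Cs"
    proof (intro allI)
      fix A B Bs Cs
      obtain X where "(\<lambda>j y. pair j y \<in> slot 0 X) = truth" "slot 1 X = A" "slot 2 X = B"
        "(\<lambda>k. slot k (slot 3 X)) = Bs" "(\<lambda>k j. slot j (slot k (slot 4 X))) = Cs"
        using ex_slots by blast
      then show "Q m truth A B Bs Cs"
        using all_X \<phi>[of X "case_nat m (\<lambda>_. 0)"] truth_clauses_truth by simp
    qed
  next
    assume "\<forall>A B Bs Cs. Q m truth A B Bs Cs"
    then show "\<forall>X. sat X (case_nat m (\<lambda>_. 0)) \<phi>"
      by (simp add: \<phi> truth_clauses_iff)
  qed
  then show ?thesis
    unfolding Pi11_def by blast
qed


section \<open>Subspaces of the Scott topology on \<open>P\<omega>\<close>\<close>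

abbreviation scott_subspace :: "nat set set \<Rightarrow> nat set topology" where
  "scott_subspace S \<equiv> subtopology scott_topology S"

lemma finite_D: "finite (D n)"
proof -
  have "D n \<subseteq> {..<n}"
  proof
    fix i
    assume "i \<in> D n"
    then have "odd (n div 2 ^ i)"
      by (simp add: D_def)
    then have "2 ^ i \<le> n"
      by (metis div_less even_zero not_le)
    then show "i \<in> {..<n}"
      using less_exp[of i] by (meson lessThan_iff less_le_trans)
  qed
  then show ?thesis
    using finite_subset by blast
qed

lemma ex_D_eq: "finite F \<Longrightarrow> \<exists>n. D n = F"
proof (induction rule: finite_induct)
  case empty
  show ?case by (rule exI[of _ 0]) (simp add: D_def)
next
  case (insert x F)
  then obtain n where "D n = F" by blast
  then have "D (set_bit x n) = insert x F"
    by (auto simp: D_def bit_iff_odd[symmetric] bit_set_bit_iff)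
  then show ?case by blast
qed

lemma topspace_scott [simp]: "topspace scott_topology = UNIV"
proof -
  have "checkD 0 = UNIV"
    by (simp add: checkD_def D_def)
  then show ?thesis
    unfolding scott_topology_def by auto
qed

lemma openin_scott: "openin scott_topology G \<longleftrightarrow> (\<forall>A\<in>G. \<exists>n. D n \<subseteq> A \<and> checkD n \<subseteq> G)"
proof
  assume "openin scott_topology G"
  then have "generate_topology_on (range checkD) G"
    unfolding scott_topology_def by (rule openin_topology_generated_by)
  then show "\<forall>A\<in>G. \<exists>n. D n \<subseteq> A \<and> checkD n \<subseteq> G"
  proof (induction rule: generate_topology_on.induct)
    case Empty
    then show ?case by simp
  next
    case (Int G1 G2)
    show ?case
    proof
      fix A
      assume "A \<in> G1 \<inter> G2"
      then obtain n1 n2 where "D n1 \<subseteq> A" "checkD n1 \<subseteq> G1" "D n2 \<subseteq> A" "checkD n2 \<subseteq> G2"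
        using Int.IH by blast
      moreover obtain n where "D n = D n1 \<union> D n2"
        using ex_D_eq[of "D n1 \<union> D n2"] by (auto simp: finite_D)
      ultimately show "\<exists>n. D n \<subseteq> A \<and> checkD n \<subseteq> G1 \<inter> G2"
        by (intro exI[of _ n]) (auto simp: checkD_def)
    qed
  next
    case (UN K)
    then show ?case by blast
  next
    case (Basis s)
    then show ?case by (auto simp: checkD_def)
  qed
next
  assume "\<forall>A\<in>G. \<exists>n. D n \<subseteq> A \<and> checkD n \<subseteq> G"
  then have "G = \<Union>{checkD n | n. checkD n \<subseteq> G}"
    unfolding checkD_def by blast
  moreover have "generate_topology_on (range checkD) (\<Union>{checkD n | n. checkD n \<subseteq> G})"
    by (rule generate_topology_on.UN) (auto intro: generate_topology_on.Basis)
  ultimately show "openin scott_topology G"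
    unfolding scott_topology_def by (simp add: openin_topology_generated_by_iff)
qed

lemma openin_scott_checkD: "openin scott_topology (checkD k)"
  unfolding openin_scott checkD_def by auto

lemma openin_scott_subspace:
  "openin (scott_subspace S) V \<longleftrightarrow>
    V \<subseteq> S \<and> (\<forall>A\<in>V. \<exists>n. D n \<subseteq> A \<and> S \<inter> checkD n \<subseteq> V)"
proof
  assume "openin (scott_subspace S) V"
  then obtain G where "openin scott_topology G" "V = G \<inter> S"
    unfolding openin_subtopology by blast
  then show "V \<subseteq> S \<and> (\<forall>A\<in>V. \<exists>n. D n \<subseteq> A \<and> S \<inter> checkD n \<subseteq> V)"
    unfolding openin_scott by blast
next
  assume V: "V \<subseteq> S \<and> (\<forall>A\<in>V. \<exists>n. D n \<subseteq> A \<and> S \<inter> checkD n \<subseteq> V)"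
  define G where "G = \<Union>{checkD n | n. S \<inter> checkD n \<subseteq> V}"
  have "openin scott_topology G"
    unfolding G_def by (rule openin_Union) (auto intro: openin_scott_checkD)
  moreover have "V = G \<inter> S"
    using V unfolding G_def checkD_def by blast
  ultimately show "openin (scott_subspace S) V"
    unfolding openin_subtopology by blast
qed

lemma openin_scott_subspace_checkD: "openin (scott_subspace S) (S \<inter> checkD k)"
  unfolding openin_scott_subspace checkD_def by blast

lemma t0_space_scott_subspace: "t0_space (scott_subspace S)"
  unfolding t0_space_def
proof (intro ballI impI)
  fix A B
  assume "A \<in> topspace (scott_subspace S)" "B \<in> topspace (scott_subspace S)"
    and "A \<noteq> B"
  then have "A \<in> S" "B \<in> S"
    by simp_all
  obtain x where "(x \<notin> A) = (x \<in> B)"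
    using \<open>A \<noteq> B\<close> unfolding set_eq_iff by blast
  moreover obtain k where "D k = {x}"
    using ex_D_eq[of "{x}"] by blast
  ultimately have "(A \<notin> S \<inter> checkD k) = (B \<in> S \<inter> checkD k)"
    using \<open>A \<in> S\<close> \<open>B \<in> S\<close> by (simp add: checkD_def)
  then show "\<exists>U. openin (scott_subspace S) U \<and> (A \<notin> U) = (B \<in> U)"
    using openin_scott_subspace_checkD by blast
qed

lemma second_countable_scott_subspace: "second_countable (scott_subspace S)"
  unfolding second_countable_def
proof (intro exI conjI)
  show "countable (range (\<lambda>k. S \<inter> checkD k))"
    by simp
  show "\<forall>V\<in>range (\<lambda>k. S \<inter> checkD k). openin (scott_subspace S) V"
    using openin_scott_subspace_checkD by blast
  show "\<forall>U A. openin (scott_subspace S) U \<and> A \<in> U \<longrightarrow>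
      (\<exists>V\<in>range (\<lambda>k. S \<inter> checkD k). A \<in> V \<and> V \<subseteq> U)"
  proof (intro allI impI)
    fix U A
    assume "openin (scott_subspace S) U \<and> A \<in> U"
    then obtain n where "A \<in> S" "D n \<subseteq> A" "S \<inter> checkD n \<subseteq> U"
      unfolding openin_scott_subspace by blast
    then show "\<exists>V\<in>range (\<lambda>k. S \<inter> checkD k). A \<in> V \<and> V \<subseteq> U"
      by (auto simp: checkD_def)
  qed
qed

lemma t1_space_scott_subspace_iff:
  "t1_space (scott_subspace S) \<longleftrightarrow> (\<forall>A\<in>S. \<forall>B\<in>S. A \<subseteq> B \<longrightarrow> A = B)"
proof
  assume T1: "t1_space (scott_subspace S)"
  show "\<forall>A\<in>S. \<forall>B\<in>S. A \<subseteq> B \<longrightarrow> A = B"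
  proof (intro ballI impI)
    fix A B
    assume "A \<in> S" "B \<in> S" "A \<subseteq> B"
    show "A = B"
    proof (rule ccontr)
      assume "A \<noteq> B"
      moreover have "\<forall>x\<in>S. \<forall>y\<in>S. x \<noteq> y \<longrightarrow> (\<exists>U. openin (scott_subspace S) U \<and> x \<in> U \<and> y \<notin> U)"
        using T1 unfolding t1_space_def by simp
      ultimately obtain V where "openin (scott_subspace S) V" "A \<in> V" "B \<notin> V"
        using \<open>A \<in> S\<close> \<open>B \<in> S\<close> by blast
      then obtain n where "D n \<subseteq> A" "S \<inter> checkD n \<subseteq> V"
        unfolding openin_scott_subspace by blast
      then show False
        using \<open>B \<in> S\<close> \<open>A \<subseteq> B\<close> \<open>B \<notin> V\<close> by (auto simp: checkD_def)
    qed
  qed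
next
  assume antichain: "\<forall>A\<in>S. \<forall>B\<in>S. A \<subseteq> B \<longrightarrow> A = B"
  show "t1_space (scott_subspace S)"
    unfolding t1_space_def
  proof (intro ballI impI)
    fix A B
    assume "A \<in> topspace (scott_subspace S)" "B \<in> topspace (scott_subspace S)"
      and "A \<noteq> B"
    then have "A \<in> S" "\<not> A \<subseteq> B"
      using antichain by auto
    then obtain x where "x \<in> A" "x \<notin> B"
      by blast
    moreover obtain k where "D k = {x}"
      using ex_D_eq[of "{x}"] by blast
    ultimately have "A \<in> S \<inter> checkD k" "B \<notin> S \<inter> checkD k"
      using \<open>A \<in> S\<close> by (auto simp: checkD_def)
    then show "\<exists>U. openin (scott_subspace S) U \<and> A \<in> U \<and> B \<notin> U"
      using openin_scott_subspace_checkD by blast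
  qed
qed

lemma Hausdorff_space_scott_subspace_iff:
  "Hausdorff_space (scott_subspace S) \<longleftrightarrow>
    (\<forall>A\<in>S. \<forall>B\<in>S. A \<noteq> B \<longrightarrow>
      (\<exists>n1 n2. D n1 \<subseteq> A \<and> D n2 \<subseteq> B \<and> \<not> (\<exists>C\<in>S. D n1 \<subseteq> C \<and> D n2 \<subseteq> C)))"
proof
  assume H: "Hausdorff_space (scott_subspace S)"
  show "\<forall>A\<in>S. \<forall>B\<in>S. A \<noteq> B \<longrightarrow>
      (\<exists>n1 n2. D n1 \<subseteq> A \<and> D n2 \<subseteq> B \<and> \<not> (\<exists>C\<in>S. D n1 \<subseteq> C \<and> D n2 \<subseteq> C))"
  proof (intro ballI impI)
    fix A B
    assume "A \<in> S" "B \<in> S" "A \<noteq> B"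
    moreover have "\<forall>x y. x \<in> S \<and> y \<in> S \<and> x \<noteq> y \<longrightarrow>
        (\<exists>U V. openin (scott_subspace S) U \<and> openin (scott_subspace S) V \<and>
          x \<in> U \<and> y \<in> V \<and> disjnt U V)"
      using H unfolding Hausdorff_space_def by simp
    ultimately obtain U V where "openin (scott_subspace S) U"
      "openin (scott_subspace S) V" "A \<in> U" "B \<in> V" "disjnt U V"
      by blast
    then obtain n1 n2 where "D n1 \<subseteq> A" "S \<inter> checkD n1 \<subseteq> U" "D n2 \<subseteq> B" "S \<inter> checkD n2 \<subseteq> V"
      unfolding openin_scott_subspace by (metis (no_types, lifting))
    with \<open>disjnt U V\<close> show "\<exists>n1 n2. D n1 \<subseteq> A \<and> D n2 \<subseteq> B \<and> \<not> (\<exists>C\<in>S. D n1 \<subseteq> C \<and> D n2 \<subseteq> C)"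
      unfolding checkD_def disjnt_def by blast
  qed
next
  assume separated: "\<forall>A\<in>S. \<forall>B\<in>S. A \<noteq> B \<longrightarrow>
      (\<exists>n1 n2. D n1 \<subseteq> A \<and> D n2 \<subseteq> B \<and> \<not> (\<exists>C\<in>S. D n1 \<subseteq> C \<and> D n2 \<subseteq> C))"
  show "Hausdorff_space (scott_subspace S)"
    unfolding Hausdorff_space_def
  proof (intro allI impI)
    fix A B
    assume "A \<in> topspace (scott_subspace S) \<and> B \<in> topspace (scott_subspace S) \<and> A \<noteq> B"
    then have "A \<in> S" "B \<in> S" "A \<noteq> B"
      by simp_all
    then obtain n1 n2 where "D n1 \<subseteq> A" "D n2 \<subseteq> B" "\<not> (\<exists>C\<in>S. D n1 \<subseteq> C \<and> D n2 \<subseteq> C)"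
      using separated[rule_format, OF \<open>A \<in> S\<close> \<open>B \<in> S\<close> \<open>A \<noteq> B\<close>] by blast
    then have "A \<in> S \<inter> checkD n1" "B \<in> S \<inter> checkD n2" "disjnt (S \<inter> checkD n1) (S \<inter> checkD n2)"
      using \<open>A \<in> S\<close> \<open>B \<in> S\<close> unfolding checkD_def disjnt_def by blast+
    then show "\<exists>U V. openin (scott_subspace S) U \<and> openin (scott_subspace S) V \<and>
        A \<in> U \<and> B \<in> V \<and> disjnt U V"
      using openin_scott_subspace_checkD by metis
  qed
qed

lemma in_closure_of_scott_subspace_checkD:
  "B \<in> scott_subspace S closure_of (S \<inter> checkD k) \<longleftrightarrow>
    B \<in> S \<and> (\<forall>j. D j \<subseteq> B \<longrightarrow> (\<exists>C\<in>S. D j \<subseteq> C \<and> D k \<subseteq> C))"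
proof
  assume B: "B \<in> scott_subspace S closure_of (S \<inter> checkD k)"
  then have "B \<in> S"
    using closure_of_subset_topspace by fastforce
  moreover have "\<exists>C\<in>S. D j \<subseteq> C \<and> D k \<subseteq> C" if "D j \<subseteq> B" for j
  proof -
    have "B \<in> S \<inter> checkD j"
      using that \<open>B \<in> S\<close> by (simp add: checkD_def)
    then obtain C where "C \<in> S \<inter> checkD k" "C \<in> S \<inter> checkD j"
      using B openin_scott_subspace_checkD unfolding in_closure_of by metis
    then show ?thesis
      by (auto simp: checkD_def)
  qed
  ultimately show "B \<in> S \<and> (\<forall>j. D j \<subseteq> B \<longrightarrow> (\<exists>C\<in>S. D j \<subseteq> C \<and> D k \<subseteq> C))"
    by blast
next
  assume B: "B \<in> S \<and> (\<forall>j. D j \<subseteq> B \<longrightarrow> (\<exists>C\<in>S. D j \<subseteq> C \<and> D k \<subseteq> C))"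
  show "B \<in> scott_subspace S closure_of (S \<inter> checkD k)"
    unfolding in_closure_of
  proof (intro conjI allI impI)
    show "B \<in> topspace (scott_subspace S)"
      using B by simp
    fix V
    assume "B \<in> V \<and> openin (scott_subspace S) V"
    then obtain j where "D j \<subseteq> B" "S \<inter> checkD j \<subseteq> V"
      unfolding openin_scott_subspace by blast
    moreover obtain C where "C \<in> S" "D j \<subseteq> C" "D k \<subseteq> C"
      using B \<open>D j \<subseteq> B\<close> by blast
    ultimately show "\<exists>C. C \<in> S \<inter> checkD k \<and> C \<in> V"
      by (auto simp: checkD_def)
  qed
qed


lemma closure_of_scott_subspace_checkD_subset_iff:
  "scott_subspace S closure_of (S \<inter> checkD k) \<subseteq> S \<inter> checkD n \<longleftrightarrow>
    (\<forall>B\<in>S. \<not> D n \<subseteq> B \<longrightarrow> (\<exists>j. D j \<subseteq> B \<and> \<not> (\<exists>C\<in>S. D j \<subseteq> C \<and> D k \<subseteq> C)))"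
    (is "_ \<longleftrightarrow> ?shrinks")
proof
  assume closure_sub: "scott_subspace S closure_of (S \<inter> checkD k) \<subseteq> S \<inter> checkD n"
  show ?shrinks
  proof (intro ballI impI)
    fix B
    assume "B \<in> S" "\<not> D n \<subseteq> B"
    then have "B \<notin> S \<inter> checkD n"
      by (simp add: checkD_def)
    then have "B \<notin> scott_subspace S closure_of (S \<inter> checkD k)"
      using closure_sub by blast
    then show "\<exists>j. D j \<subseteq> B \<and> \<not> (\<exists>C\<in>S. D j \<subseteq> C \<and> D k \<subseteq> C)"
      using \<open>B \<in> S\<close> unfolding in_closure_of_scott_subspace_checkD by blast
  qed
next
  assume shrinks: ?shrinks
  show "scott_subspace S closure_of (S \<inter> checkD k) \<subseteq> S \<inter> checkD n"
  proof
    fix B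
    assume "B \<in> scott_subspace S closure_of (S \<inter> checkD k)"
    then have "B \<in> S" and "\<forall>j. D j \<subseteq> B \<longrightarrow> (\<exists>C\<in>S. D j \<subseteq> C \<and> D k \<subseteq> C)"
      unfolding in_closure_of_scott_subspace_checkD by blast+
    then have "D n \<subseteq> B"
      using shrinks by blast
    with \<open>B \<in> S\<close> show "B \<in> S \<inter> checkD n"
      by (simp add: checkD_def)
  qed
qed

lemma regular_scott_subspace_shrink_checkD:
  assumes "regular_space (scott_subspace S)" and "A \<in> S" and "D n \<subseteq> A"
  obtains k where "D k \<subseteq> A" and "scott_subspace S closure_of (S \<inter> checkD k) \<subseteq> S \<inter> checkD n"
proof -
  have "A \<in> S \<inter> checkD n"
    using assms(2,3) by (simp add: checkD_def)
  moreover have "\<exists>U V. openin (scott_subspace S) U \<and> closedin (scott_subspace S) V \<and>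
      A \<in> U \<and> U \<subseteq> V \<and> V \<subseteq> W" if "openin (scott_subspace S) W" "A \<in> W" for W
    using assms(1) that unfolding neighbourhood_base_of_closedin[symmetric] neighbourhood_base_of
    by blast
  ultimately obtain U V where "openin (scott_subspace S) U" "closedin (scott_subspace S) V"
    "A \<in> U" "U \<subseteq> V" "V \<subseteq> S \<inter> checkD n"
    using openin_scott_subspace_checkD by metis
  from \<open>openin _ U\<close> \<open>A \<in> U\<close> obtain k where "D k \<subseteq> A" "S \<inter> checkD k \<subseteq> U"
    unfolding openin_scott_subspace by blast
  have "S \<inter> checkD k \<subseteq> V"
    using \<open>S \<inter> checkD k \<subseteq> U\<close> \<open>U \<subseteq> V\<close> by (rule order_trans)
  then have "scott_subspace S closure_of (S \<inter> checkD k) \<subseteq> V"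
    using \<open>closedin _ V\<close> by (rule closure_of_minimal)
  then have "scott_subspace S closure_of (S \<inter> checkD k) \<subseteq> S \<inter> checkD n"
    using \<open>V \<subseteq> S \<inter> checkD n\<close> by (rule order_trans)
  with \<open>D k \<subseteq> A\<close> show ?thesis
    using that by blast
qed

lemma regular_scott_subspaceI:
  assumes shrink: "\<And>A n. A \<in> S \<Longrightarrow> D n \<subseteq> A \<Longrightarrow>
    \<exists>k. D k \<subseteq> A \<and> scott_subspace S closure_of (S \<inter> checkD k) \<subseteq> S \<inter> checkD n"
  shows "regular_space (scott_subspace S)"
  unfolding neighbourhood_base_of_closedin[symmetric] neighbourhood_base_of
proof (intro allI impI)
  fix W A
  let ?closure = "\<lambda>k. scott_subspace S closure_of (S \<inter> checkD k)"
  assume "openin (scott_subspace S) W \<and> A \<in> W"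
  then obtain n where "A \<in> S" "D n \<subseteq> A" "S \<inter> checkD n \<subseteq> W"
    unfolding openin_scott_subspace by blast
  then obtain k where "D k \<subseteq> A" "?closure k \<subseteq> S \<inter> checkD n"
    using shrink by blast
  show "\<exists>U V. openin (scott_subspace S) U \<and> closedin (scott_subspace S) V \<and>
      A \<in> U \<and> U \<subseteq> V \<and> V \<subseteq> W"
  proof (intro exI conjI)
    show "openin (scott_subspace S) (S \<inter> checkD k)"
      by (rule openin_scott_subspace_checkD)
    show "closedin (scott_subspace S) (?closure k)"
      by (rule closedin_closure_of)
    show "A \<in> S \<inter> checkD k"
      using \<open>A \<in> S\<close> \<open>D k \<subseteq> A\<close> by (simp add: checkD_def)
    show "S \<inter> checkD k \<subseteq> ?closure k"
      by (rule closure_of_subset) simp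
    show "?closure k \<subseteq> W"
      using \<open>?closure k \<subseteq> S \<inter> checkD n\<close> \<open>S \<inter> checkD n \<subseteq> W\<close> by (rule order_trans)
  qed
qed

lemma regular_space_scott_subspace_iff:
  "regular_space (scott_subspace S) \<longleftrightarrow>
    (\<forall>A\<in>S. \<forall>n. D n \<subseteq> A \<longrightarrow> (\<exists>k. D k \<subseteq> A \<and>
      (\<forall>B\<in>S. \<not> D n \<subseteq> B \<longrightarrow> (\<exists>j. D j \<subseteq> B \<and> \<not> (\<exists>C\<in>S. D j \<subseteq> C \<and> D k \<subseteq> C)))))"
proof -
  have "regular_space (scott_subspace S) \<longleftrightarrow> (\<forall>A\<in>S. \<forall>n. D n \<subseteq> A \<longrightarrow>
      (\<exists>k. D k \<subseteq> A \<and> scott_subspace S closure_of (S \<inter> checkD k) \<subseteq> S \<inter> checkD n))"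
  proof (intro iffI ballI allI impI)
    fix A n
    assume "regular_space (scott_subspace S)" "A \<in> S" "D n \<subseteq> A"
    then obtain k where "D k \<subseteq> A" "scott_subspace S closure_of (S \<inter> checkD k) \<subseteq> S \<inter> checkD n"
      by (rule regular_scott_subspace_shrink_checkD)
    then show "\<exists>k. D k \<subseteq> A \<and> scott_subspace S closure_of (S \<inter> checkD k) \<subseteq> S \<inter> checkD n"
      by (intro exI[of _ k] conjI)
  qed (rule regular_scott_subspaceI, blast)
  then show ?thesis
    by (simp only: closure_of_scott_subspace_checkD_subset_iff)
qed


section \<open>Urysohn metrization\<close>

lemma inj_on_separating_maps:
  fixes g :: "nat \<Rightarrow> 'a \<Rightarrow> real"
  assumes "t0_space X"
    and sep: "\<And>U x. openin X U \<Longrightarrow> x \<in> U \<Longrightarrow> \<exists>n. g n x \<noteq> 0 \<and> (\<forall>y\<in>topspace X - U. g n y = 0)"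
  shows "inj_on (\<lambda>x n. g n x) (topspace X)"
proof (rule inj_onI, rule ccontr)
  fix x y
  assume xy: "x \<in> topspace X" "y \<in> topspace X" "x \<noteq> y" and same: "(\<lambda>n. g n x) = (\<lambda>n. g n y)"
  have separates: "(\<lambda>n. g n x) \<noteq> (\<lambda>n. g n y)" if "openin X U" "x \<in> U" "y \<in> topspace X - U" for U x y
    using sep[OF that(1,2)] that(3) by metis
  obtain U where "openin X U" "(x \<notin> U) = (y \<in> U)"
    using \<open>t0_space X\<close>[unfolded t0_space_def, rule_format, OF xy] by blast
  then show False
    using separates[of U x y] separates[of U y x] xy(1,2) same by (cases "x \<in> U") auto
qed

lemma open_map_separating_maps:
  fixes g :: "nat \<Rightarrow> 'a \<Rightarrow> real"
  assumes sep: "\<And>U x. openin X U \<Longrightarrow> x \<in> U \<Longrightarrow> \<exists>n. g n x \<noteq> 0 \<and> (\<forall>y\<in>topspace X - U. g n y = 0)"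
  shows "open_map X (subtopology (powertop_real UNIV) ((\<lambda>x n. g n x) ` topspace X)) (\<lambda>x n. g n x)"
  unfolding open_map_def
proof (intro allI impI)
  fix U
  assume "openin X U"
  then obtain N where N: "\<And>x. x \<in> U \<Longrightarrow> g (N x) x \<noteq> 0 \<and> (\<forall>y\<in>topspace X - U. g (N x) y = 0)"
    using sep by metis
  let ?W = "\<Union>x\<in>U. {z \<in> topspace (powertop_real UNIV). z (N x) \<in> - {0}}"
  have "openin (powertop_real UNIV) {z \<in> topspace (powertop_real UNIV). z n \<in> - {0}}" for n :: nat
    using continuous_map_product_projection[of n UNIV "\<lambda>_. euclideanreal"]
    by (rule openin_continuous_map_preimage) auto
  then have "openin (powertop_real UNIV) ?W"
    by (intro openin_Union) auto
  moreover have "(\<lambda>x n. g n x) ` U = ?W \<inter> (\<lambda>x n. g n x) ` topspace X"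
    using \<open>openin X U\<close> openin_subset[OF \<open>openin X U\<close>] N by (auto simp: image_iff)
  ultimately show "openin (subtopology (powertop_real UNIV) ((\<lambda>x n. g n x) ` topspace X))
      ((\<lambda>x n. g n x) ` U)"
    unfolding openin_subtopology by blast
qed

lemma metrizable_space_if_separating_maps:
  fixes g :: "nat \<Rightarrow> 'a \<Rightarrow> real"
  assumes "t0_space X"
    and cont: "\<And>n. continuous_map X euclideanreal (g n)"
    and sep: "\<And>U x. openin X U \<Longrightarrow> x \<in> U \<Longrightarrow> \<exists>n. g n x \<noteq> 0 \<and> (\<forall>y\<in>topspace X - U. g n y = 0)"
  shows "metrizable_space X"
proof -
  let ?e = "\<lambda>x n. g n x"
  let ?Y = "subtopology (powertop_real UNIV) (?e ` topspace X)"
  have "continuous_map X ?Y ?e"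
    using cont by (simp add: continuous_map_in_subtopology continuous_map_componentwise_UNIV)
  then have "embedding_map X ?Y ?e"
    using injective_open_imp_embedding_map open_map_separating_maps[OF sep]
      inj_on_separating_maps[OF \<open>t0_space X\<close> sep] by blast
  then have "X homeomorphic_space subtopology ?Y (?e ` topspace X)"
    by (rule embedding_map_imp_homeomorphic_space)
  moreover have "metrizable_space (powertop_real (UNIV :: nat set))"
    by (simp add: metrizable_space_product_topology metrizable_space_euclidean)
  ultimately show ?thesis
    using homeomorphic_metrizable_space metrizable_space_subtopology by blast
qed

lemma regular_space_base_closure_pair:
  assumes "regular_space X"
    and base: "\<And>U x. openin X U \<Longrightarrow> x \<in> U \<Longrightarrow> \<exists>V\<in>\<B>. x \<in> V \<and> V \<subseteq> U"
    and open_\<B>: "\<And>V. V \<in> \<B> \<Longrightarrow> openin X V"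
    and "openin X G" and "x \<in> G"
  shows "\<exists>B\<^sub>1\<in>\<B>. \<exists>B\<^sub>2\<in>\<B>. x \<in> B\<^sub>1 \<and> X closure_of B\<^sub>1 \<subseteq> B\<^sub>2 \<and> B\<^sub>2 \<subseteq> G"
proof -
  obtain B\<^sub>2 where "B\<^sub>2 \<in> \<B>" "x \<in> B\<^sub>2" "B\<^sub>2 \<subseteq> G"
    using base[OF \<open>openin X G\<close> \<open>x \<in> G\<close>] by blast
  have "\<exists>V C. openin X V \<and> closedin X C \<and> x \<in> V \<and> V \<subseteq> C \<and> C \<subseteq> B\<^sub>2"
    using \<open>regular_space X\<close> open_\<B>[OF \<open>B\<^sub>2 \<in> \<B>\<close>] \<open>x \<in> B\<^sub>2\<close>
    unfolding neighbourhood_base_of_closedin[symmetric] neighbourhood_base_of by blast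
  then obtain V C where "openin X V" "closedin X C" "x \<in> V" "V \<subseteq> C" "C \<subseteq> B\<^sub>2"
    by blast
  moreover obtain B\<^sub>1 where "B\<^sub>1 \<in> \<B>" "x \<in> B\<^sub>1" "B\<^sub>1 \<subseteq> V"
    using base[OF \<open>openin X V\<close> \<open>x \<in> V\<close>] by blast
  ultimately have "X closure_of B\<^sub>1 \<subseteq> B\<^sub>2"
    by (meson closure_of_minimal order_trans)
  with \<open>B\<^sub>1 \<in> \<B>\<close> \<open>B\<^sub>2 \<in> \<B>\<close> \<open>x \<in> B\<^sub>1\<close> \<open>B\<^sub>2 \<subseteq> G\<close> show ?thesis
    by blast
qed

text \<open>One Urysohn function for each of the countably many pairs of basic sets
  \<open>(B\<^sub>1, B\<^sub>2)\<close> with \<open>closure B\<^sub>1 \<subseteq> B\<^sub>2\<close>.\<close>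

lemma regular_second_countable_separating_maps:
  assumes "regular_space X" and "second_countable X" and "topspace X \<noteq> {}"
  obtains g :: "nat \<Rightarrow> 'a \<Rightarrow> real"
  where "\<And>n. continuous_map X euclideanreal (g n)"
    and "\<And>U x. openin X U \<Longrightarrow> x \<in> U \<Longrightarrow> \<exists>n. g n x \<noteq> 0 \<and> (\<forall>y\<in>topspace X - U. g n y = 0)"
proof -
  have "normal_space X"
    using regular_second_countable_imp_hereditarily_normal_space[of X] assms(1,2)
    unfolding hereditarily_def by (metis order_refl subtopology_topspace)
  obtain \<B> where "countable \<B>" and open_\<B>: "\<And>V. V \<in> \<B> \<Longrightarrow> openin X V"
    and base: "\<And>U x. openin X U \<Longrightarrow> x \<in> U \<Longrightarrow> \<exists>V\<in>\<B>. x \<in> V \<and> V \<subseteq> U"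
    using \<open>second_countable X\<close> unfolding second_countable_def by metis
  define P where "P = {(B\<^sub>1, B\<^sub>2) \<in> \<B> \<times> \<B>. X closure_of B\<^sub>1 \<subseteq> B\<^sub>2}"
  have "countable P"
    using \<open>countable \<B>\<close> by (intro countable_subset[of P "\<B> \<times> \<B>"]) (auto simp: P_def)
  have P_separates: "\<exists>B\<^sub>1 B\<^sub>2. (B\<^sub>1, B\<^sub>2) \<in> P \<and> x \<in> B\<^sub>1 \<and> B\<^sub>2 \<subseteq> U"
    if U: "openin X U" "x \<in> U" for U x
  proof -
    obtain B\<^sub>1 B\<^sub>2 where "B\<^sub>1 \<in> \<B>" "B\<^sub>2 \<in> \<B>" "x \<in> B\<^sub>1" "X closure_of B\<^sub>1 \<subseteq> B\<^sub>2" "B\<^sub>2 \<subseteq> U"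
      using regular_space_base_closure_pair[OF \<open>regular_space X\<close> base open_\<B> U] by blast
    then show ?thesis
      unfolding P_def by blast
  qed
  have "\<exists>f. continuous_map X euclideanreal f \<and> f ` (topspace X - snd p) \<subseteq> {0} \<and>
      f ` (X closure_of fst p) \<subseteq> {1}" if "p \<in> P" for p
  proof -
    have "closedin X (topspace X - snd p)" "disjnt (topspace X - snd p) (X closure_of fst p)"
      using that open_\<B> unfolding P_def disjnt_def by auto
    then show ?thesis
      using Urysohn_lemma_alt[OF \<open>normal_space X\<close> _ closedin_closure_of] by metis
  qed
  then obtain F where F: "\<And>p. p \<in> P \<Longrightarrow> continuous_map X euclideanreal (F p) \<and>
      F p ` (topspace X - snd p) \<subseteq> {0} \<and> F p ` (X closure_of fst p) \<subseteq> {1}"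
    by metis
  obtain x where "x \<in> topspace X"
    using \<open>topspace X \<noteq> {}\<close> by blast
  then have "P \<noteq> {}"
    using P_separates[OF openin_topspace] by blast
  show ?thesis
  proof
    show "continuous_map X euclideanreal (F (from_nat_into P n))" for n
      using F from_nat_into[OF \<open>P \<noteq> {}\<close>] by blast
    show "\<exists>n. F (from_nat_into P n) x \<noteq> 0 \<and> (\<forall>y\<in>topspace X - U. F (from_nat_into P n) y = 0)"
      if U: "openin X U" "x \<in> U" for U x
    proof -
      obtain B\<^sub>1 B\<^sub>2 where "(B\<^sub>1, B\<^sub>2) \<in> P" "x \<in> B\<^sub>1" "B\<^sub>2 \<subseteq> U"
        using P_separates[OF U] by blast
      moreover obtain n where "from_nat_into P n = (B\<^sub>1, B\<^sub>2)"
        using from_nat_into_surj[OF \<open>countable P\<close> \<open>(B\<^sub>1, B\<^sub>2) \<in> P\<close>] by blast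
      moreover have "B\<^sub>1 \<subseteq> topspace X"
        using \<open>(B\<^sub>1, B\<^sub>2) \<in> P\<close> open_\<B> openin_subset by (auto simp: P_def)
      then have "F (B\<^sub>1, B\<^sub>2) x = 1"
        using F[OF \<open>(B\<^sub>1, B\<^sub>2) \<in> P\<close>] closure_of_subset \<open>x \<in> B\<^sub>1\<close> by fastforce
      moreover have "F (B\<^sub>1, B\<^sub>2) y = 0" if "y \<in> topspace X - U" for y
        using F[OF \<open>(B\<^sub>1, B\<^sub>2) \<in> P\<close>] \<open>B\<^sub>2 \<subseteq> U\<close> that by fastforce
      ultimately show ?thesis
        by (intro exI[of _ n]) simp
    qed
  qed
qed

lemma metrizable_space_iff_regular_space:
  assumes "t0_space X" and "second_countable X"
  shows "metrizable_space X \<longleftrightarrow> regular_space X"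
proof
  assume "regular_space X"
  show "metrizable_space X"
  proof (cases "topspace X = {}")
    case True
    then show ?thesis
      by (simp add: empty_metrizable_space)
  next
    case False
    obtain g :: "nat \<Rightarrow> 'a \<Rightarrow> real"
      where "\<And>n. continuous_map X euclideanreal (g n)"
        and "\<And>U x. openin X U \<Longrightarrow> x \<in> U \<Longrightarrow> \<exists>n. g n x \<noteq> 0 \<and> (\<forall>y\<in>topspace X - U. g n y = 0)"
      using regular_second_countable_separating_maps \<open>regular_space X\<close> \<open>second_countable X\<close> False
      by metis
    with \<open>t0_space X\<close> show ?thesis
      by (rule metrizable_space_if_separating_maps)
  qed
qed (rule metrizable_imp_regular_space)


section \<open>\<open>\<Pi>\<^sup>1\<^sub>1\<close> definitions of the separation properties\<close>

lemma ex_not_bex_iff_all_ex: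
  "(\<exists>x. P x \<and> \<not> (\<exists>z\<in>S. R x z)) \<longleftrightarrow> (\<forall>f. \<exists>x. P x \<and> \<not> (f x \<in> S \<and> R x (f x)))"
  by metis

lemma ex2_not_bex_iff_all_ex2:
  "(\<exists>x y. P x \<and> Q y \<and> \<not> (\<exists>z\<in>S. R x y z)) \<longleftrightarrow>
    (\<forall>f. \<exists>x y. P x \<and> Q y \<and> \<not> (f x y \<in> S \<and> R x y (f x y)))"
proof -
  have "(\<forall>x y. \<exists>z. \<not> (P x \<and> Q y \<and> \<not> (z \<in> S \<and> R x y z))) \<Longrightarrow>
      \<exists>f. \<forall>x y. \<not> (P x \<and> Q y \<and> \<not> (f x y \<in> S \<and> R x y (f x y)))"
    by metis
  then show ?thesis by blast
qed

lemma ex_ball_all_iff_all2_ex: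
  "(\<exists>x. P x \<and> (\<forall>y\<in>S. Q y \<longrightarrow> (\<forall>z. R x y z))) \<longleftrightarrow>
    (\<forall>f g. \<exists>x. P x \<and> (f x \<in> S \<and> Q (f x) \<longrightarrow> R x (f x) (g x)))"
proof -
  have "(\<forall>x. \<exists>y z. \<not> (P x \<and> (y \<in> S \<and> Q y \<longrightarrow> R x y z))) \<Longrightarrow>
      \<exists>f g. \<forall>x. \<not> (P x \<and> (f x \<in> S \<and> Q (f x) \<longrightarrow> R x (f x) (g x)))"
    by metis
  then show ?thesis by blast
qed

text \<open>In the matrices the families \<open>C\<close> (and \<open>B\<close> for regularity) are Skolem functions of the
  set quantifiers that the topological characterisations place behind number quantifiers.\<close>

definition t1_matrix :: "nat \<Rightarrow> (nat \<Rightarrow> nat \<Rightarrow> bool) \<Rightarrow> nat set \<Rightarrow> nat set \<Rightarrow> bool" where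
  "t1_matrix m T A B \<longleftrightarrow> (in_pi T m A \<and> in_pi T m B \<and> A \<subseteq> B \<longrightarrow> B \<subseteq> A)"

definition hausdorff_matrix ::
  "nat \<Rightarrow> (nat \<Rightarrow> nat \<Rightarrow> bool) \<Rightarrow> nat set \<Rightarrow> nat set \<Rightarrow> (nat \<Rightarrow> nat \<Rightarrow> nat set) \<Rightarrow> bool" where
  "hausdorff_matrix m T A B C \<longleftrightarrow> (in_pi T m A \<and> in_pi T m B \<and> A \<noteq> B \<longrightarrow>
    (\<exists>n1 n2. codes_subset T n1 A \<and> codes_subset T n2 B \<and>
      \<not> (in_pi T m (C n1 n2) \<and> codes_subset T n1 (C n1 n2) \<and> codes_subset T n2 (C n1 n2))))"

definition regular_matrix ::
  "nat \<Rightarrow> (nat \<Rightarrow> nat \<Rightarrow> bool) \<Rightarrow> nat set \<Rightarrow> (nat \<Rightarrow> nat set) \<Rightarrow> (nat \<Rightarrow> nat \<Rightarrow> nat set) \<Rightarrow> bool" where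
  "regular_matrix m T A B C \<longleftrightarrow> (in_pi T m A \<longrightarrow> (\<forall>n. codes_subset T n A \<longrightarrow>
    (\<exists>k. codes_subset T k A \<and> (in_pi T m (B k) \<and> \<not> codes_subset T n (B k) \<longrightarrow>
      (\<exists>j. codes_subset T j (B k) \<and>
        \<not> (in_pi T m (C k j) \<and> codes_subset T j (C k j) \<and> codes_subset T k (C k j)))))))"

lemma t1_space_pi_top_iff: "t1_space (pi_top m) \<longleftrightarrow> (\<forall>A B. t1_matrix m truth A B)"
  unfolding pi_top_def t1_space_scott_subspace_iff t1_matrix_def by auto

lemma Hausdorff_space_pi_top_iff:
  "Hausdorff_space (pi_top m) \<longleftrightarrow> (\<forall>A B C. hausdorff_matrix m truth A B C)"
  unfolding pi_top_def Hausdorff_space_scott_subspace_iff ex2_not_bex_iff_all_ex2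
    hausdorff_matrix_def
  by (simp add: Ball_def imp_conjL)

lemma regular_space_pi_top_iff:
  "regular_space (pi_top m) \<longleftrightarrow> (\<forall>A B C. regular_matrix m truth A B C)"
proof -
  have swap_quantifiers: "(\<forall>n. P n \<longrightarrow> (\<forall>f g. Q n f g)) \<longleftrightarrow> (\<forall>f g n. P n \<longrightarrow> Q n f g)"
    for P :: "nat \<Rightarrow> bool" and Q :: "nat \<Rightarrow> (nat \<Rightarrow> nat set) \<Rightarrow> (nat \<Rightarrow> nat \<Rightarrow> nat set) \<Rightarrow> bool"
    by blast
  show ?thesis
    unfolding pi_top_def regular_space_scott_subspace_iff ex_not_bex_iff_all_ex
      ex_ball_all_iff_all2_ex regular_matrix_def
    by (simp add: Ball_def imp_conjL swap_quantifiers)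
qed

lemma Pi11_t1_space: "Pi11 {m. t1_space (pi_top m)}"
proof -
  have "definable (\<lambda>e X. t1_matrix (e 0) (\<lambda>j y. pair j y \<in> slot 0 X) (slot 1 X) (slot 2 X))"
    unfolding t1_matrix_def in_pi_def in_U_def codes_subset_def slot_def subset_iff mem_Collect_eq
    by (intro definable_intros definable_fun_intros)
  then have "Pi11 {m. \<forall>A B (Bs :: nat \<Rightarrow> nat set) (Cs :: nat \<Rightarrow> nat \<Rightarrow> nat set).
      t1_matrix m truth A B}"
    by (rule Pi11_if_definable[where Q="\<lambda>m T A B Bs Cs. t1_matrix m T A B"])
  then show ?thesis
    by (simp add: t1_space_pi_top_iff)
qed

lemma Pi11_Hausdorff_space: "Pi11 {m. Hausdorff_space (pi_top m)}"
proof -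
  have "definable (\<lambda>e X. hausdorff_matrix (e 0) (\<lambda>j y. pair j y \<in> slot 0 X) (slot 1 X)
      (slot 2 X) (\<lambda>k j. slot j (slot k (slot 4 X))))"
    unfolding hausdorff_matrix_def in_pi_def in_U_def codes_subset_def slot_def set_eq_iff
      mem_Collect_eq
    by (intro definable_intros definable_fun_intros)
  then have "Pi11 {m. \<forall>A B (Bs :: nat \<Rightarrow> nat set) Cs. hausdorff_matrix m truth A B Cs}"
    by (rule Pi11_if_definable[where Q="\<lambda>m T A B Bs Cs. hausdorff_matrix m T A B Cs"])
  then show ?thesis
    by (simp add: Hausdorff_space_pi_top_iff)
qed

lemma Pi11_regular_space: "Pi11 {m. regular_space (pi_top m)}"
proof -
  have "definable (\<lambda>e X. regular_matrix (e 0) (\<lambda>j y. pair j y \<in> slot 0 X) (slot 1 X)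
      (\<lambda>k. slot k (slot 3 X)) (\<lambda>k j. slot j (slot k (slot 4 X))))"
    unfolding regular_matrix_def in_pi_def in_U_def codes_subset_def slot_def mem_Collect_eq
    by (intro definable_intros definable_fun_intros)
  then have "Pi11 {m. \<forall>A (B :: nat set) Bs Cs. regular_matrix m truth A Bs Cs}"
    by (rule Pi11_if_definable[where Q="\<lambda>m T A B Bs Cs. regular_matrix m T A Bs Cs"])
  then show ?thesis
    by (simp add: regular_space_pi_top_iff)
qed

theorem proposition24:
  shows "Pi11 {m. t1_space (pi_top m)}
       \<and> Pi11 {m. Hausdorff_space (pi_top m)}
       \<and> Pi11 {m. regular_space (pi_top m)}
       \<and> Pi11 {m. metrizable_space (pi_top m)}"
proof -
  have "metrizable_space (pi_top m) \<longleftrightarrow> regular_space (pi_top m)" for m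
    unfolding pi_top_def
    by (intro metrizable_space_iff_regular_space t0_space_scott_subspace
        second_countable_scott_subspace)
  then show ?thesis
    using Pi11_t1_space Pi11_Hausdorff_space Pi11_regular_space by simp
qed

end
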